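(* Let $n,m\ge 2$, $R>0$, and let $k_1,h_1$ be functions on $[0,\pi R/2]$ with $k_1''\le 0$ and $h_1''\le 0$, such that $g_1=ds^2+k_1^2(s)\,ds_{m-1}^2+h_1^2(s)\,ds_{n-1}^2$ is a smooth Riemannian metric of positive Ricci curvature on $\mathbb{S}^{n+m-1}$. For $\lambda\in[1,2]$ set $k_\lambda(s)=(2-\lambda)k_1(s)+(\lambda-1)R\cos(s/R)$, $h_\lambda(s)=(2-\lambda)h_1(s)+(\lambda-1)R\sin(s/R)$, and $g_\lambda=ds^2+k_\lambda^2(s)\,ds_{m-1}^2+h_\lambda^2(s)\,ds_{n-1}^2$ (so $g_2$ is the round metric of radius $R$). Then $g_\lambda$ has positive Ricci curvature for all $\lambda\in[1,2]$.
   Context: $ds_k^2$ denotes the unit round metric on $\mathbb{S}^k$; the metrics are doubly warped products on $(0,\pi R/2)\times\mathbb{S}^{m-1}\times\mathbb{S}^{n-1}$ extending smoothly to $\mathbb{S}^{n+m-1}$. *)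

theory Defs
  imports "HOL-Analysis.Analysis"
begin

text \<open>D is a family of successive (one-sided at the endpoints) derivatives of f on [0,L]:
  f is C-infinity on the closed interval [0,L].\<close>
definition smooth_cl :: "real \<Rightarrow> (nat \<Rightarrow> real \<Rightarrow> real) \<Rightarrow> (real \<Rightarrow> real) \<Rightarrow> bool" where
  "smooth_cl L D f \<longleftrightarrow> (\<forall>x\<in>{0..L}. D 0 x = f x) \<and>
     (\<forall>j. \<forall>x\<in>{0..L}. (D j has_real_derivative D (Suc j) x) (at x within {0..L}))"

text \<open>ds^2 + k^2 ds_{m-1}^2 + h^2 ds_{n-1}^2 on (0,L) x S^{m-1} x S^{n-1} extends to a smooth
  Riemannian metric on the sphere S^{n+m-1} (standard smoothness conditions at the
  singular orbits s = 0, where the S^{n-1} factor collapses, and s = L, where the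
  S^{m-1} factor collapses).\<close>
definition dwp_metric :: "real \<Rightarrow> (real \<Rightarrow> real) \<Rightarrow> (real \<Rightarrow> real) \<Rightarrow> bool" where
  "dwp_metric L k h \<longleftrightarrow> L > 0 \<and> (\<exists>Dk Dh. smooth_cl L Dk k \<and> smooth_cl L Dh h \<and>
     (\<forall>s\<in>{0..<L}. k s > 0) \<and> (\<forall>s\<in>{0<..L}. h s > 0) \<and>
     Dh 1 0 = 1 \<and> (\<forall>j. Dh (2*j) 0 = 0 \<and> Dk (2*j+1) 0 = 0) \<and>
     Dk 1 L = -1 \<and> (\<forall>j. Dk (2*j) L = 0 \<and> Dh (2*j+1) L = 0))"

text \<open>Ricci curvatures of the doubly warped product in the orthonormal eigenframe
  (radial direction, unit direction tangent to S^{m-1}, unit direction tangent to S^{n-1}).\<close>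
definition ric_rad :: "nat \<Rightarrow> nat \<Rightarrow> (real \<Rightarrow> real) \<Rightarrow> (real \<Rightarrow> real) \<Rightarrow> real \<Rightarrow> real" where
  "ric_rad m n k h s = - (real m - 1) * deriv (deriv k) s / k s
                       - (real n - 1) * deriv (deriv h) s / h s"

definition ric_k :: "nat \<Rightarrow> nat \<Rightarrow> (real \<Rightarrow> real) \<Rightarrow> (real \<Rightarrow> real) \<Rightarrow> real \<Rightarrow> real" where
  "ric_k m n k h s = - deriv (deriv k) s / k s
      + (real m - 2) * (1 - (deriv k s)\<^sup>2) / (k s)\<^sup>2
      - (real n - 1) * deriv k s * deriv h s / (k s * h s)"

definition ric_h :: "nat \<Rightarrow> nat \<Rightarrow> (real \<Rightarrow> real) \<Rightarrow> (real \<Rightarrow> real) \<Rightarrow> real \<Rightarrow> real" where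
  "ric_h m n k h s = - deriv (deriv h) s / h s
      + (real n - 2) * (1 - (deriv h s)\<^sup>2) / (h s)\<^sup>2
      - (real m - 1) * deriv k s * deriv h s / (k s * h s)"

text \<open>Positive Ricci curvature of the (smooth, compact) metric: since the Ricci tensor is
  continuous on the compact sphere and the regular part (0,L) x S^{m-1} x S^{n-1} is dense,
  positivity is equivalent to a uniform positive lower bound of the eigenvalues on (0,L).\<close>
definition dwp_pos_ricci :: "real \<Rightarrow> nat \<Rightarrow> nat \<Rightarrow> (real \<Rightarrow> real) \<Rightarrow> (real \<Rightarrow> real) \<Rightarrow> bool" where
  "dwp_pos_ricci L m n k h \<longleftrightarrow> dwp_metric L k h \<and> (\<exists>\<epsilon>>0. \<forall>s\<in>{0<..<L}.
      ric_rad m n k h s \<ge> \<epsilon> \<and> ric_k m n k h s \<ge> \<epsilon> \<and> ric_h m n k h s \<ge> \<epsilon>)"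

end

theory Submission
  imports Defs
begin

text \<open>
  The warping functions of g_\<lambda> are the convex combinations, with weights a = 2 - \<lambda> and
  b = \<lambda> - 1, of those of g_1 and of the round metric g_2 = (R cos(s/R), R sin(s/R)), which is
  Einstein with constant (m + n - 2)/R^2. For a concave pair (k, h) the boundary conditions force
  -1 \<le> k' \<le> 0 \<le> h' \<le> 1 and trap the warping functions between linear functions,
  k(0)(L - s)/L \<le> k(s) \<le> L - s and h(L) s/L \<le> h(s) \<le> s. Hence any two concave metrics are
  comparable: the combined warping functions K, H satisfy K \<le> C k_i and H \<le> C h_i.
  Under these sign conditions each Ricci eigenvalue is a sum of the nonnegative terms
  -K''/K, (1 - K'^2)/K^2 and -K'H'/(KH), and each of them dominates (a/C)^2 times the corresponding
  term of g_1 and (b/C)^2 times that of g_2. As a or b is at least 1/2, the Ricci curvature of the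
  combination stays above min(\<epsilon>_1, \<epsilon>_2)/(4C^2).
\<close>

section \<open>Smooth functions on a closed interval\<close>

lemma smooth_cl_lincomb:
  assumes "smooth_cl L D f" "smooth_cl L E g"
  shows "smooth_cl L (\<lambda>j x. a * D j x + b * E j x) (\<lambda>x. a * f x + b * g x)"
  using assms unfolding smooth_cl_def by (auto intro!: DERIV_add DERIV_cmult)

lemma smooth_cl_interior_derivative:
  assumes "smooth_cl L D f" "s \<in> {0<..<L}"
  shows "(D j has_real_derivative D (Suc j) s) (at s)"
proof -
  have "(D j has_real_derivative D (Suc j) s) (at s within {0..L})"
    using assms unfolding smooth_cl_def by auto
  then have "(D j has_real_derivative D (Suc j) s) (at s within {0<..<L})"
    by (rule has_field_derivative_subset) auto
  moreover have "at s within {0<..<L} = at s"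
    using assms(2) by (intro at_within_open) auto
  ultimately show ?thesis
    by simp
qed

lemma smooth_cl_deriv:
  assumes "smooth_cl L D f" "s \<in> {0<..<L}"
  shows "deriv f s = D 1 s" "deriv (deriv f) s = D 2 s"
proof -
  have has_deriv: "(f has_real_derivative D 1 x) (at x)" if "x \<in> {0<..<L}" for x
  proof (rule has_field_derivative_transform_within_open[where S="{0<..<L}"])
    show "(D 0 has_real_derivative D 1 x) (at x)"
      using smooth_cl_interior_derivative[OF assms(1) that, of 0] by simp
    show "D 0 y = f y" if "y \<in> {0<..<L}" for y
      using assms(1) that unfolding smooth_cl_def by auto
  qed (use that in auto)
  have deriv_eq: "deriv f x = D 1 x" if "x \<in> {0<..<L}" for x
    using has_deriv[OF that] by (rule DERIV_imp_deriv)
  then show "deriv f s = D 1 s"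
    using assms(2) .
  have "(deriv f has_real_derivative D 2 s) (at s)"
  proof (rule has_field_derivative_transform_within_open[where S="{0<..<L}"])
    show "(D 1 has_real_derivative D 2 s) (at s)"
      using smooth_cl_interior_derivative[OF assms, of 1] by (simp add: numeral_2_eq_2)
    show "D 1 y = deriv f y" if "y \<in> {0<..<L}" for y
      using deriv_eq[OF that] by simp
  qed (use assms(2) in auto)
  then show "deriv (deriv f) s = D 2 s"
    by (rule DERIV_imp_deriv)
qed

lemma smooth_cl_deriv_lincomb:
  assumes "smooth_cl L D f" "smooth_cl L E g" "s \<in> {0<..<L}"
  shows "deriv (\<lambda>x. a * f x + b * g x) s = a * deriv f s + b * deriv g s"
    "deriv (deriv (\<lambda>x. a * f x + b * g x)) s = a * deriv (deriv f) s + b * deriv (deriv g) s"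
  using smooth_cl_deriv[OF smooth_cl_lincomb[OF assms(1,2)] assms(3)]
    smooth_cl_deriv[OF assms(1,3)] smooth_cl_deriv[OF assms(2,3)]
  by simp_all

lemma smooth_cl_mvt:
  assumes "smooth_cl L D f" "0 \<le> x" "x < y" "y \<le> L"
  shows "\<exists>z\<in>{x<..<y}. D j y - D j x = D (Suc j) z * (y - x)"
proof -
  have "\<exists>z\<in>{x<..<y}. D j y - D j x = (\<lambda>h. D (Suc j) z * h) (y - x)"
  proof (rule mvt_simple)
    fix t assume t: "x \<le> t" "t \<le> y"
    have "(D j has_real_derivative D (Suc j) t) (at t within {0..L})"
      using assms t unfolding smooth_cl_def by auto
    then have "(D j has_real_derivative D (Suc j) t) (at t within {x..y})"
      by (rule has_field_derivative_subset) (use assms in auto)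
    then show "(D j has_derivative (\<lambda>h. D (Suc j) t * h)) (at t within {x..y})"
      by (simp add: has_field_derivative_def)
  qed (use assms in auto)
  then show ?thesis
    by simp
qed

lemma smooth_cl_deriv_antimono:
  assumes "smooth_cl L D f" "\<forall>s\<in>{0<..<L}. D 2 s \<le> 0" "0 \<le> x" "x \<le> y" "y \<le> L"
  shows "D 1 y \<le> D 1 x"
proof (cases "x = y")
  case False
  with assms(4) have "x < y"
    by simp
  then obtain z where z: "z \<in> {x<..<y}" "D 1 y - D 1 x = D 2 z * (y - x)"
    using smooth_cl_mvt[OF assms(1,3) _ assms(5), of 1, unfolded Suc_1] by blast
  with assms have "D 2 z * (y - x) \<le> 0"
    by (intro mult_nonpos_nonneg) auto
  with z show ?thesis
    by simp
qed simp

context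
  fixes L :: real and D :: "nat \<Rightarrow> real \<Rightarrow> real" and f :: "real \<Rightarrow> real" and s :: real
  assumes smooth: "smooth_cl L D f" and concave: "\<forall>s\<in>{0<..<L}. D 2 s \<le> 0"
    and s: "s \<in> {0<..<L}"
begin

private lemma f_eq_D0: "x \<in> {0..L} \<Longrightarrow> f x = D 0 x"
  using smooth unfolding smooth_cl_def by auto

lemma smooth_cl_concave_below_tangent_0: "f s \<le> f 0 + D 1 0 * s"
proof -
  obtain z where z: "z \<in> {0<..<s}" "D 0 s - D 0 0 = D 1 z * s"
    using smooth_cl_mvt[OF smooth, of 0 s 0] s by auto
  have "D 1 z * s \<le> D 1 0 * s"
    using smooth_cl_deriv_antimono[OF smooth concave, of 0 z] s z by (intro mult_right_mono) auto
  moreover have "f s - f 0 = D 1 z * s"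
    using s z f_eq_D0[of 0] f_eq_D0[of s] by simp
  ultimately show ?thesis
    by linarith
qed

lemma smooth_cl_concave_below_tangent_L: "f s \<le> f L - D 1 L * (L - s)"
proof -
  obtain z where z: "z \<in> {s<..<L}" "D 0 L - D 0 s = D 1 z * (L - s)"
    using smooth_cl_mvt[OF smooth, of s L 0] s by auto
  have "D 1 L * (L - s) \<le> D 1 z * (L - s)"
    using smooth_cl_deriv_antimono[OF smooth concave, of z L] s z by (intro mult_right_mono) auto
  moreover have "f L - f s = D 1 z * (L - s)"
    using s z f_eq_D0[of L] f_eq_D0[of s] by simp
  ultimately show ?thesis
    by linarith
qed

lemma smooth_cl_concave_above_chord: "f 0 * (L - s) + f L * s \<le> f s * L"
proof -
  obtain z1 where z1: "z1 \<in> {0<..<s}" "D 0 s - D 0 0 = D 1 z1 * s"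
    using smooth_cl_mvt[OF smooth, of 0 s 0] s by auto
  obtain z2 where z2: "z2 \<in> {s<..<L}" "D 0 L - D 0 s = D 1 z2 * (L - s)"
    using smooth_cl_mvt[OF smooth, of s L 0] s by auto
  have "D 1 z2 \<le> D 1 z1"
    using smooth_cl_deriv_antimono[OF smooth concave, of z1 z2] z1 z2 by auto
  then have "s * (L - s) * D 1 z2 \<le> s * (L - s) * D 1 z1"
    using s by (intro mult_left_mono) auto
  moreover have "s * (L - s) * D 1 z2 = s * (D 0 L - D 0 s)"
    using z2 by (simp add: mult.commute mult.left_commute)
  moreover have "s * (L - s) * D 1 z1 = (L - s) * (D 0 s - D 0 0)"
    using z1 by (simp add: mult.commute mult.left_commute)
  ultimately have "s * (D 0 L - D 0 s) \<le> (L - s) * (D 0 s - D 0 0)"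
    by linarith
  then show ?thesis
    using s f_eq_D0[of 0] f_eq_D0[of s] f_eq_D0[of L] by (simp add: algebra_simps)
qed

end

section \<open>Concave doubly warped metrics\<close>

definition dwp_concave :: "real \<Rightarrow> (real \<Rightarrow> real) \<Rightarrow> (real \<Rightarrow> real) \<Rightarrow> bool" where
  "dwp_concave L k h \<longleftrightarrow> (\<forall>s\<in>{0<..<L}. deriv (deriv k) s \<le> 0 \<and> deriv (deriv h) s \<le> 0)"

lemma dwp_metric_pos:
  assumes "dwp_metric L k h"
  shows "s \<in> {0..<L} \<Longrightarrow> 0 < k s" "s \<in> {0<..L} \<Longrightarrow> 0 < h s"
  using assms unfolding dwp_metric_def by auto

lemma dwp_concave_bounds:
  assumes "dwp_metric L k h" "dwp_concave L k h" "s \<in> {0<..<L}"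
  shows "-1 \<le> deriv k s" "deriv k s \<le> 0" "k s \<le> L - s" "k 0 * (L - s) \<le> k s * L"
    and "0 \<le> deriv h s" "deriv h s \<le> 1" "h s \<le> s" "h L * s \<le> h s * L"
proof -
  obtain Dk Dh where sk: "smooth_cl L Dk k" and sh: "smooth_cl L Dh h"
    and bdry: "Dh 1 0 = 1" "\<forall>j. Dh (2*j) 0 = 0 \<and> Dk (2*j+1) 0 = 0"
      "Dk 1 L = -1" "\<forall>j. Dk (2*j) L = 0 \<and> Dh (2*j+1) L = 0"
    using assms(1) unfolding dwp_metric_def by blast
  have "Dk 1 0 = 0" "Dk 0 L = 0" "Dh 0 0 = 0" "Dh 1 L = 0"
    using bdry(2,4)[rule_format, of 0] by simp_all
  moreover have "k L = Dk 0 L" "k 0 = Dk 0 0" "h L = Dh 0 L" "h 0 = Dh 0 0"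
    using sk sh assms(3) unfolding smooth_cl_def by auto
  moreover have k_concave: "\<forall>x\<in>{0<..<L}. Dk 2 x \<le> 0" and h_concave: "\<forall>x\<in>{0<..<L}. Dh 2 x \<le> 0"
    using assms(2) smooth_cl_deriv(2)[OF sk] smooth_cl_deriv(2)[OF sh]
    unfolding dwp_concave_def by auto
  moreover note smooth_cl_concave_below_tangent_L[OF sk k_concave assms(3)]
    smooth_cl_concave_below_tangent_0[OF sh h_concave assms(3)]
    smooth_cl_concave_above_chord[OF sk k_concave assms(3)]
    smooth_cl_concave_above_chord[OF sh h_concave assms(3)]
  ultimately show "-1 \<le> deriv k s" "deriv k s \<le> 0" "k s \<le> L - s" "k 0 * (L - s) \<le> k s * L"
    and "0 \<le> deriv h s" "deriv h s \<le> 1" "h s \<le> s" "h L * s \<le> h s * L"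
    using assms(3) bdry(1,3) smooth_cl_deriv(1)[OF sk assms(3)] smooth_cl_deriv(1)[OF sh assms(3)]
      smooth_cl_deriv_antimono[OF sk k_concave, of s L] smooth_cl_deriv_antimono[OF sk k_concave, of 0 s]
      smooth_cl_deriv_antimono[OF sh h_concave, of s L] smooth_cl_deriv_antimono[OF sh h_concave, of 0 s]
    by auto
qed

lemma dwp_concave_comparable:
  assumes "dwp_metric L k h" "dwp_concave L k h" "s \<in> {0<..<L}"
    and "L / k 0 \<le> C" "L / h L \<le> C"
  shows "L - s \<le> C * k s" "s \<le> C * h s"
proof -
  have "0 < k 0" "0 < h L" "0 < k s" "0 < h s"
    using dwp_metric_pos[OF assms(1)] assms(3) by auto
  moreover have "L - s \<le> L / k 0 * k s" "s \<le> L / h L * h s"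
    using dwp_concave_bounds(4,8)[OF assms(1-3)] calculation by (simp_all add: field_simps)
  moreover have "L / k 0 * k s \<le> C * k s"
    by (rule mult_right_mono[OF assms(4)]) (use \<open>0 < k s\<close> in simp)
  moreover have "L / h L * h s \<le> C * h s"
    by (rule mult_right_mono[OF assms(5)]) (use \<open>0 < h s\<close> in simp)
  ultimately show "L - s \<le> C * k s" "s \<le> C * h s"
    by linarith+
qed

lemma convex_comb_pos:
  fixes a b p q :: real
  assumes "0 \<le> a" "0 \<le> b" "a + b = 1" "0 < p" "0 < q"
  shows "0 < a * p + b * q"
  using assms by (cases "a = 0") (auto intro: add_pos_nonneg)

lemma dwp_metric_convex_comb:
  assumes "dwp_metric L k1 h1" "dwp_metric L k2 h2" "0 \<le> a" "0 \<le> b" "a + b = 1"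
  shows "dwp_metric L (\<lambda>s. a * k1 s + b * k2 s) (\<lambda>s. a * h1 s + b * h2 s)"
proof -
  obtain Dk1 Dh1 Dk2 Dh2 where smooth: "smooth_cl L Dk1 k1" "smooth_cl L Dh1 h1"
      "smooth_cl L Dk2 k2" "smooth_cl L Dh2 h2"
    and boundary: "Dh1 1 0 = 1" "\<forall>j. Dh1 (2*j) 0 = 0 \<and> Dk1 (2*j+1) 0 = 0"
      "Dk1 1 L = -1" "\<forall>j. Dk1 (2*j) L = 0 \<and> Dh1 (2*j+1) L = 0"
      "Dh2 1 0 = 1" "\<forall>j. Dh2 (2*j) 0 = 0 \<and> Dk2 (2*j+1) 0 = 0"
      "Dk2 1 L = -1" "\<forall>j. Dk2 (2*j) L = 0 \<and> Dh2 (2*j+1) L = 0"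
    using assms(1,2) unfolding dwp_metric_def by blast
  have pos: "\<forall>s\<in>{0..<L}. 0 < a * k1 s + b * k2 s" "\<forall>s\<in>{0<..L}. 0 < a * h1 s + b * h2 s"
    using dwp_metric_pos[OF assms(1)] dwp_metric_pos[OF assms(2)] assms(3-5)
    by (auto intro: convex_comb_pos)
  have "0 < L"
    using assms(1) unfolding dwp_metric_def by simp
  show ?thesis
    unfolding dwp_metric_def
    by (intro conjI; (rule exI[of _ "\<lambda>j x. a * Dk1 j x + b * Dk2 j x"],
        rule exI[of _ "\<lambda>j x. a * Dh1 j x + b * Dh2 j x"])?)
      (use \<open>0 < L\<close> smooth boundary pos assms(3-5) in \<open>auto simp: algebra_simps intro!: smooth_cl_lincomb\<close>)
qed

section \<open>Ricci curvature of convex combinations\<close>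

definition ric_radial :: "real \<Rightarrow> real \<Rightarrow> real \<Rightarrow> real \<Rightarrow> real \<Rightarrow> real \<Rightarrow> real" where
  "ric_radial \<mu> \<nu> p p'' r r'' = - \<mu> * p'' / p - \<nu> * r'' / r"

definition ric_tangential :: "real \<Rightarrow> real \<Rightarrow> real \<Rightarrow> real \<Rightarrow> real \<Rightarrow> real \<Rightarrow> real \<Rightarrow> real" where
  "ric_tangential \<mu> \<nu> p p' p'' r r' = - p'' / p + \<mu> * (1 - p'\<^sup>2) / p\<^sup>2 - \<nu> * p' * r' / (p * r)"

lemma ric_rad_eq_ric_radial:
  "ric_rad m n k h s =
    ric_radial (real m - 1) (real n - 1) (k s) (deriv (deriv k) s) (h s) (deriv (deriv h) s)"
  by (simp add: ric_rad_def ric_radial_def)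

lemma ric_k_eq_ric_tangential:
  "ric_k m n k h s =
    ric_tangential (real m - 2) (real n - 1) (k s) (deriv k s) (deriv (deriv k) s) (h s) (deriv h s)"
  by (simp add: ric_k_def ric_tangential_def)

lemma ric_h_eq_ric_tangential:
  "ric_h m n k h s =
    ric_tangential (real n - 2) (real m - 1) (h s) (deriv h s) (deriv (deriv h) s) (k s) (deriv k s)"
  by (simp add: ric_h_def ric_tangential_def mult_ac)

lemma comparable_weight_bounds:
  fixes a b p q C :: real
  assumes "0 \<le> a" "0 \<le> b" "0 < p" "0 \<le> q" "a * p + b * q \<le> C * p"
  shows "0 \<le> a / C" "a / C \<le> 1" "a / C / p \<le> a / (a * p + b * q)"
proof -
  have "0 \<le> a / C \<and> a / C \<le> 1 \<and> a / (C * p) \<le> a / (a * p + b * q)"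
  proof (cases "a = 0")
    case False
    then have "0 < a * p" "a * p \<le> a * p + b * q"
      using assms by simp_all
    then have K: "0 < a * p + b * q" and "a * p \<le> C * p"
      using assms(5) by linarith+
    then have "a \<le> C"
      using assms(3) by simp
    with False assms(1) have C: "0 < C" "a \<le> C"
      by simp_all
    have "a / (C * p) \<le> a / (a * p + b * q)"
      using K C assms by (intro divide_left_mono) auto
    with C assms(1) show ?thesis
      by simp
  qed simp
  then show "0 \<le> a / C" "a / C \<le> 1" "a / C / p \<le> a / (a * p + b * q)"
    by simp_all
qed

lemma neg_second_deriv_convex_comb:
  fixes a b p q p'' q'' C :: real
  assumes "0 \<le> a" "0 \<le> b" "0 < p" "0 \<le> q" "a * p + b * q \<le> C * p" "p'' \<le> 0" "q'' \<le> 0"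
  shows "(a / C)\<^sup>2 * (- p'' / p) \<le> - (a * p'' + b * q'') / (a * p + b * q)"
proof -
  note weight = comparable_weight_bounds[OF assms(1-5)]
  have "(a / C)\<^sup>2 \<le> a / C"
    using mult_left_le_one_le[OF weight(1) weight(1,2)] by (simp only: power2_eq_square)
  then have "(a / C)\<^sup>2 * (- p'' / p) \<le> a / C * (- p'' / p)"
    using assms(3,6) by (intro mult_right_mono) (auto simp: divide_nonpos_pos)
  also have "\<dots> = a / C / p * (- p'')"
    by simp
  also have "\<dots> \<le> a / (a * p + b * q) * (- p'')"
    using weight assms(6) by (intro mult_right_mono) auto
  also have "\<dots> = a * (- p'') / (a * p + b * q)"
    by simp
  also have "\<dots> \<le> (a * (- p'') + b * (- q'')) / (a * p + b * q)"
    using assms by (intro divide_right_mono) (auto simp: mult_nonneg_nonpos)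
  also have "\<dots> = - (a * p'' + b * q'') / (a * p + b * q)"
    by (simp add: algebra_simps)
  finally show ?thesis .
qed

lemma one_minus_sq_convex_comb:
  fixes a b x y :: real
  assumes "0 \<le> a" "0 \<le> b" "a + b = 1" "x\<^sup>2 \<le> 1" "y\<^sup>2 \<le> 1"
  shows "a\<^sup>2 * (1 - x\<^sup>2) \<le> 1 - (a * x + b * y)\<^sup>2"
proof -
  have b: "b = 1 - a"
    using assms(3) by simp
  have "1 - (a * x + b * y)\<^sup>2 = a * (1 - x\<^sup>2) + b * (1 - y\<^sup>2) + a * b * (x - y)\<^sup>2"
    unfolding b by (simp add: power2_eq_square algebra_simps)
  moreover have "0 \<le> b * (1 - y\<^sup>2)" "0 \<le> a * b * (x - y)\<^sup>2"
    using assms by simp_all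
  moreover have "a\<^sup>2 \<le> a"
    using mult_left_le_one_le[of a a] assms(1-3) by (simp add: power2_eq_square)
  then have "a\<^sup>2 * (1 - x\<^sup>2) \<le> a * (1 - x\<^sup>2)"
    using assms(4) by (intro mult_right_mono) simp_all
  ultimately show ?thesis
    by linarith
qed

lemma neg_mult_convex_comb:
  fixes a b x y z w :: real
  assumes "0 \<le> a" "0 \<le> b" "x * w \<le> 0" "y * z \<le> 0" "y * w \<le> 0"
  shows "a\<^sup>2 * (- (x * z)) \<le> - ((a * x + b * y) * (a * z + b * w))"
proof -
  have "- ((a * x + b * y) * (a * z + b * w))
      = a\<^sup>2 * (- (x * z)) + a * b * (- (x * w)) + a * b * (- (y * z)) + b\<^sup>2 * (- (y * w))"
    by (simp add: power2_eq_square algebra_simps)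
  moreover have "0 \<le> a * b * (- (x * w))" "0 \<le> a * b * (- (y * z))" "0 \<le> b\<^sup>2 * (- (y * w))"
    using assms by (simp_all add: mult_nonneg_nonpos)
  ultimately show ?thesis
    by linarith
qed

lemma ric_radial_convex_comb:
  fixes a b p q r t p'' q'' r'' t'' C \<mu> \<nu> :: real
  assumes "0 \<le> a" "0 \<le> b" "0 < p" "0 \<le> q" "0 < r" "0 \<le> t"
    and "a * p + b * q \<le> C * p" "a * r + b * t \<le> C * r"
    and "p'' \<le> 0" "q'' \<le> 0" "r'' \<le> 0" "t'' \<le> 0" "0 \<le> \<mu>" "0 \<le> \<nu>"
  shows "(a / C)\<^sup>2 * ric_radial \<mu> \<nu> p p'' r r''
    \<le> ric_radial \<mu> \<nu> (a * p + b * q) (a * p'' + b * q'') (a * r + b * t) (a * r'' + b * t'')"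
proof -
  have "(a / C)\<^sup>2 * (- p'' / p) \<le> - (a * p'' + b * q'') / (a * p + b * q)"
      "(a / C)\<^sup>2 * (- r'' / r) \<le> - (a * r'' + b * t'') / (a * r + b * t)"
    using assms by (intro neg_second_deriv_convex_comb; simp)+
  then have "\<mu> * ((a / C)\<^sup>2 * (- p'' / p)) + \<nu> * ((a / C)\<^sup>2 * (- r'' / r))
      \<le> \<mu> * (- (a * p'' + b * q'') / (a * p + b * q)) + \<nu> * (- (a * r'' + b * t'') / (a * r + b * t))"
    using assms(13,14) by (intro add_mono mult_left_mono)
  then show ?thesis
    by (simp add: ric_radial_def divide_inverse algebra_simps)
qed

lemma ric_tangential_convex_comb:
  fixes a b p q r t p' q' r' t' p'' q'' C \<mu> \<nu> :: real
  assumes "0 \<le> a" "0 \<le> b" "a + b = 1" "0 < p" "0 < q" "0 < r" "0 < t"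
    and "a * p + b * q \<le> C * p" "a * r + b * t \<le> C * r"
    and "p'' \<le> 0" "q'' \<le> 0" "p'\<^sup>2 \<le> 1" "q'\<^sup>2 \<le> 1"
    and "p' * r' \<le> 0" "p' * t' \<le> 0" "q' * r' \<le> 0" "q' * t' \<le> 0" "0 \<le> \<mu>" "0 \<le> \<nu>"
  shows "(a / C)\<^sup>2 * ric_tangential \<mu> \<nu> p p' p'' r r'
    \<le> ric_tangential \<mu> \<nu> (a * p + b * q) (a * p' + b * q') (a * p'' + b * q'')
        (a * r + b * t) (a * r' + b * t')"
proof -
  define K K' H H' where "K = a * p + b * q" and "K' = a * p' + b * q'"
    and "H = a * r + b * t" and "H' = a * r' + b * t'"
  have K: "0 < K" and H: "0 < H"
    unfolding K_def H_def using assms by (auto intro: convex_comb_pos)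
  note wp = comparable_weight_bounds[OF assms(1,2,4) less_imp_le[OF assms(5)] assms(8), folded K_def]
  note wr = comparable_weight_bounds[OF assms(1,2,6) less_imp_le[OF assms(7)] assms(9), folded H_def]
  define \<theta> where "\<theta> = a / C"
  have second: "\<theta>\<^sup>2 * (- p'' / p) \<le> - (a * p'' + b * q'') / K"
    unfolding \<theta>_def K_def using assms by (intro neg_second_deriv_convex_comb) auto
  have numerator: "a\<^sup>2 * (1 - p'\<^sup>2) \<le> 1 - K'\<^sup>2"
    unfolding K'_def using assms(1-3,12,13) by (rule one_minus_sq_convex_comb)
  have "(\<theta> / p)\<^sup>2 \<le> (a / K)\<^sup>2"
    using wp(3) divide_nonneg_pos[OF wp(1) assms(4)] unfolding \<theta>_def by (rule power_mono)
  then have "(\<theta> / p)\<^sup>2 * (1 - p'\<^sup>2) \<le> (a / K)\<^sup>2 * (1 - p'\<^sup>2)"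
    using assms(12) by (intro mult_right_mono) auto
  also have "\<dots> = a\<^sup>2 * (1 - p'\<^sup>2) / K\<^sup>2"
    by (simp add: power_divide)
  also have "\<dots> \<le> (1 - K'\<^sup>2) / K\<^sup>2"
    using numerator by (rule divide_right_mono) simp
  finally have slope: "\<theta>\<^sup>2 * ((1 - p'\<^sup>2) / p\<^sup>2) \<le> (1 - K'\<^sup>2) / K\<^sup>2"
    by (simp add: power_divide)
  have cross_numerator: "a\<^sup>2 * (- (p' * r')) \<le> - (K' * H')"
    unfolding K'_def H'_def using assms(1,2,15-17) by (rule neg_mult_convex_comb)
  have "\<theta>\<^sup>2 * (- (p' * r') / (p * r)) = \<theta> / p * (\<theta> / r) * (- (p' * r'))"
    by (simp add: power2_eq_square)
  also have "\<dots> \<le> a / K * (a / H) * (- (p' * r'))"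
    using wp wr assms(1,4,6,14) K divide_nonneg_pos[OF wp(1) assms(6)] unfolding \<theta>_def
    by (intro mult_right_mono mult_mono) auto
  also have "\<dots> = a\<^sup>2 * (- (p' * r')) / (K * H)"
    by (simp add: power2_eq_square)
  also have "\<dots> \<le> - (K' * H') / (K * H)"
    using cross_numerator K H by (intro divide_right_mono) auto
  finally have cross: "\<theta>\<^sup>2 * (- (p' * r') / (p * r)) \<le> - (K' * H') / (K * H)" .
  have "\<theta>\<^sup>2 * ric_tangential \<mu> \<nu> p p' p'' r r'
      = \<theta>\<^sup>2 * (- p'' / p) + \<mu> * (\<theta>\<^sup>2 * ((1 - p'\<^sup>2) / p\<^sup>2)) + \<nu> * (\<theta>\<^sup>2 * (- (p' * r') / (p * r)))"
    by (simp add: ric_tangential_def divide_inverse algebra_simps)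
  also have "\<dots> \<le> - (a * p'' + b * q'') / K + \<mu> * ((1 - K'\<^sup>2) / K\<^sup>2) + \<nu> * (- (K' * H') / (K * H))"
    using second slope cross assms(18,19) by (intro add_mono mult_left_mono)
  also have "\<dots> = ric_tangential \<mu> \<nu> K K' (a * p'' + b * q'') H H'"
    by (simp add: ric_tangential_def)
  finally show ?thesis
    unfolding \<theta>_def K_def K'_def H_def H'_def .
qed

lemma convex_weights_sq_lower_bound:
  fixes a b C e1 e2 x1 x2 x :: real
  assumes "0 \<le> a" "0 \<le> b" "a + b = 1" "0 \<le> e1" "0 \<le> e2"
    and "e1 \<le> x1" "(a / C)\<^sup>2 * x1 \<le> x" "e2 \<le> x2" "(b / C)\<^sup>2 * x2 \<le> x"
  shows "min e1 e2 / (4 * C\<^sup>2) \<le> x"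
proof -
  have "a\<^sup>2 * (e1 / C\<^sup>2) \<le> x" "b\<^sup>2 * (e2 / C\<^sup>2) \<le> x"
    using assms(6-9) mult_left_mono[OF assms(6), of "(a / C)\<^sup>2"] mult_left_mono[OF assms(8), of "(b / C)\<^sup>2"]
    by (simp_all add: power_divide)
  moreover have "1 / 4 \<le> a\<^sup>2 \<or> 1 / 4 \<le> b\<^sup>2"
    using power_mono[of "1 / 2" a 2] power_mono[of "1 / 2" b 2] assms(1-3)
    by (cases "1 / 2 \<le> a") (simp_all add: power2_eq_square)
  moreover have "min e1 e2 / (4 * C\<^sup>2) \<le> 1 / 4 * (e1 / C\<^sup>2)" "min e1 e2 / (4 * C\<^sup>2) \<le> 1 / 4 * (e2 / C\<^sup>2)"
    by (simp_all add: divide_right_mono)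
  ultimately show ?thesis
    using assms(4,5) mult_right_mono[of "1 / 4" "a\<^sup>2" "e1 / C\<^sup>2"] mult_right_mono[of "1 / 4" "b\<^sup>2" "e2 / C\<^sup>2"]
    by force
qed

lemma dwp_ricci_convex_comb_lower:
  fixes k1 h1 k2 h2 :: "real \<Rightarrow> real" and a b C s :: real
  defines "K \<equiv> \<lambda>x. a * k1 x + b * k2 x" and "H \<equiv> \<lambda>x. a * h1 x + b * h2 x"
  assumes mn: "2 \<le> m" "2 \<le> n"
    and metric1: "dwp_metric L k1 h1" and concave1: "dwp_concave L k1 h1"
    and metric2: "dwp_metric L k2 h2" and concave2: "dwp_concave L k2 h2"
    and weights: "0 \<le> a" "0 \<le> b" "a + b = 1"
    and s: "s \<in> {0<..<L}" and comparable: "L - s \<le> C * k1 s" "s \<le> C * h1 s"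
  shows "(a / C)\<^sup>2 * ric_rad m n k1 h1 s \<le> ric_rad m n K H s"
    "(a / C)\<^sup>2 * ric_k m n k1 h1 s \<le> ric_k m n K H s"
    "(a / C)\<^sup>2 * ric_h m n k1 h1 s \<le> ric_h m n K H s"
proof -
  obtain Dk1 Dh1 Dk2 Dh2 where
    "smooth_cl L Dk1 k1" "smooth_cl L Dh1 h1" "smooth_cl L Dk2 k2" "smooth_cl L Dh2 h2"
    using metric1 metric2 unfolding dwp_metric_def by blast
  note deriv_K = smooth_cl_deriv_lincomb[OF this(1,3) s, of a b]
    and deriv_H = smooth_cl_deriv_lincomb[OF this(2,4) s, of a b]
  note bounds1 = dwp_concave_bounds[OF metric1 concave1 s]
    and bounds2 = dwp_concave_bounds[OF metric2 concave2 s]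
  have pos: "0 < k1 s" "0 < h1 s" "0 < k2 s" "0 < h2 s"
    using dwp_metric_pos[OF metric1] dwp_metric_pos[OF metric2] s by auto
  have concave: "deriv (deriv k1) s \<le> 0" "deriv (deriv h1) s \<le> 0"
      "deriv (deriv k2) s \<le> 0" "deriv (deriv h2) s \<le> 0"
    using concave1 concave2 s unfolding dwp_concave_def by auto
  have "a * k1 s + b * k2 s \<le> C * k1 s" "a * h1 s + b * h2 s \<le> C * h1 s"
    using convex_bound_le[OF bounds1(3) bounds2(3) weights]
      convex_bound_le[OF bounds1(7) bounds2(7) weights] comparable by linarith+
  moreover have "(deriv k1 s)\<^sup>2 \<le> 1" "(deriv k2 s)\<^sup>2 \<le> 1" "(deriv h1 s)\<^sup>2 \<le> 1" "(deriv h2 s)\<^sup>2 \<le> 1"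
    using bounds1 bounds2 by (simp_all add: abs_square_le_1)
  moreover have "deriv ki s * deriv hj s \<le> 0" "deriv hj s * deriv ki s \<le> 0"
    if "ki \<in> {k1, k2}" "hj \<in> {h1, h2}" for ki hj
    using that bounds1 bounds2 by (auto simp: mult_nonpos_nonneg mult_nonneg_nonpos)
  ultimately show "(a / C)\<^sup>2 * ric_rad m n k1 h1 s \<le> ric_rad m n K H s"
    "(a / C)\<^sup>2 * ric_k m n k1 h1 s \<le> ric_k m n K H s"
    "(a / C)\<^sup>2 * ric_h m n k1 h1 s \<le> ric_h m n K H s"
    unfolding K_def H_def ric_rad_eq_ric_radial ric_k_eq_ric_tangential ric_h_eq_ric_tangential
      deriv_K deriv_H
    using weights pos concave mn
    by (auto intro!: ric_radial_convex_comb ric_tangential_convex_comb)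
qed

lemma dwp_pos_ricci_convex_comb:
  assumes "2 \<le> m" "2 \<le> n"
    and "dwp_pos_ricci L m n k1 h1" "dwp_concave L k1 h1"
    and "dwp_pos_ricci L m n k2 h2" "dwp_concave L k2 h2"
    and "0 \<le> a" "0 \<le> b" "a + b = 1"
  shows "dwp_pos_ricci L m n (\<lambda>s. a * k1 s + b * k2 s) (\<lambda>s. a * h1 s + b * h2 s)"
proof -
  obtain e1 e2 where metric1: "dwp_metric L k1 h1" and metric2: "dwp_metric L k2 h2"
    and e: "0 < e1" "0 < e2"
    and ric1: "\<forall>s\<in>{0<..<L}. e1 \<le> ric_rad m n k1 h1 s \<and> e1 \<le> ric_k m n k1 h1 s \<and> e1 \<le> ric_h m n k1 h1 s"
    and ric2: "\<forall>s\<in>{0<..<L}. e2 \<le> ric_rad m n k2 h2 s \<and> e2 \<le> ric_k m n k2 h2 s \<and> e2 \<le> ric_h m n k2 h2 s"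
    using assms(3,5) unfolding dwp_pos_ricci_def by blast
  define C where "C = Max {L / k1 0, L / h1 L, L / k2 0, L / h2 L}"
  have "0 < L"
    using metric1 unfolding dwp_metric_def by simp
  then have "0 < L / k1 0"
    using dwp_metric_pos[OF metric1] by simp
  then have "0 < C"
    unfolding C_def by (simp add: Max_gr_iff)
  have comparable: "L - s \<le> C * k1 s" "s \<le> C * h1 s" "L - s \<le> C * k2 s" "s \<le> C * h2 s"
    if "s \<in> {0<..<L}" for s
    using dwp_concave_comparable[OF metric1 assms(4) that] dwp_concave_comparable[OF metric2 assms(6) that]
    unfolding C_def by simp_all
  have swap: "(\<lambda>x. b * k2 x + a * k1 x) = (\<lambda>x. a * k1 x + b * k2 x)"
    "(\<lambda>x. b * h2 x + a * h1 x) = (\<lambda>x. a * h1 x + b * h2 x)"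
    by (simp_all add: add.commute)
  have "min e1 e2 / (4 * C\<^sup>2) \<le> ric_rad m n (\<lambda>s. a * k1 s + b * k2 s) (\<lambda>s. a * h1 s + b * h2 s) s \<and>
      min e1 e2 / (4 * C\<^sup>2) \<le> ric_k m n (\<lambda>s. a * k1 s + b * k2 s) (\<lambda>s. a * h1 s + b * h2 s) s \<and>
      min e1 e2 / (4 * C\<^sup>2) \<le> ric_h m n (\<lambda>s. a * k1 s + b * k2 s) (\<lambda>s. a * h1 s + b * h2 s) s"
    if s: "s \<in> {0<..<L}" for s
  proof -
    note lower1 = dwp_ricci_convex_comb_lower[OF assms(1,2) metric1 assms(4) metric2 assms(6)
        assms(7-9) s comparable(1,2)[OF s]]
      and lower2 = dwp_ricci_convex_comb_lower[OF assms(1,2) metric2 assms(6) metric1 assms(4)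
        assms(8,7) _ s comparable(3,4)[OF s], unfolded swap]
    show ?thesis
      using convex_weights_sq_lower_bound[OF assms(7-9) _ _ _ lower1(1) _ lower2(1)]
        convex_weights_sq_lower_bound[OF assms(7-9) _ _ _ lower1(2) _ lower2(2)]
        convex_weights_sq_lower_bound[OF assms(7-9) _ _ _ lower1(3) _ lower2(3)]
        assms(9) e ric1 ric2 s
      by (simp add: add.commute)
  qed
  moreover have "0 < min e1 e2 / (4 * C\<^sup>2)"
    using e \<open>0 < C\<close> by simp
  ultimately show ?thesis
    unfolding dwp_pos_ricci_def using dwp_metric_convex_comb[OF metric1 metric2 assms(7-9)] by blast
qed

section \<open>The round sphere\<close>

definition cos_derivs :: "real \<Rightarrow> nat \<Rightarrow> real \<Rightarrow> real" where
  "cos_derivs R j x = R * (1 / R) ^ j * cos (x / R + real j * pi / 2)"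

definition sin_derivs :: "real \<Rightarrow> nat \<Rightarrow> real \<Rightarrow> real" where
  "sin_derivs R j x = R * (1 / R) ^ j * sin (x / R + real j * pi / 2)"

lemma shift_quarter_turn: "x / R + real (Suc j) * pi / 2 = (x / R + real j * pi / 2) + pi / 2"
  by (simp add: distrib_right add_divide_distrib)

lemma has_real_derivative_cos_derivs:
  "(cos_derivs R j has_real_derivative cos_derivs R (Suc j) x) (at x)"
proof -
  have "(cos_derivs R j has_real_derivative
      R * (1 / R) ^ j * (- sin (x / R + real j * pi / 2) * (1 / R))) (at x)"
    unfolding cos_derivs_def by (auto intro!: derivative_eq_intros)
  moreover have "R * (1 / R) ^ j * (- sin (x / R + real j * pi / 2) * (1 / R)) = cos_derivs R (Suc j) x"
    unfolding cos_derivs_def shift_quarter_turn by (simp add: cos_add)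
  ultimately show ?thesis
    by simp
qed

lemma has_real_derivative_sin_derivs:
  "(sin_derivs R j has_real_derivative sin_derivs R (Suc j) x) (at x)"
proof -
  have "(sin_derivs R j has_real_derivative
      R * (1 / R) ^ j * (cos (x / R + real j * pi / 2) * (1 / R))) (at x)"
    unfolding sin_derivs_def by (auto intro!: derivative_eq_intros)
  moreover have "R * (1 / R) ^ j * (cos (x / R + real j * pi / 2) * (1 / R)) = sin_derivs R (Suc j) x"
    unfolding sin_derivs_def shift_quarter_turn by (simp add: sin_add)
  ultimately show ?thesis
    by simp
qed

lemma round_boundary_values:
  assumes "R \<noteq> 0"
  shows "sin_derivs R 1 0 = 1" "sin_derivs R (2 * j) 0 = 0" "cos_derivs R (2 * j + 1) 0 = 0"
    "cos_derivs R 1 (pi * R / 2) = -1" "cos_derivs R (2 * j) (pi * R / 2) = 0"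
    "sin_derivs R (2 * j + 1) (pi * R / 2) = 0"
proof -
  have even: "real (2 * j) * pi / 2 = real j * pi"
    by simp
  have odd: "real (2 * j + 1) * pi / 2 = real j * pi + pi / 2"
    by (simp add: field_simps)
  have quarter: "pi * R / 2 / R = pi / 2"
    using assms by simp
  show "sin_derivs R 1 0 = 1" "sin_derivs R (2 * j) 0 = 0" "cos_derivs R (2 * j + 1) 0 = 0"
    "cos_derivs R 1 (pi * R / 2) = -1" "cos_derivs R (2 * j) (pi * R / 2) = 0"
    "sin_derivs R (2 * j + 1) (pi * R / 2) = 0"
    using assms unfolding cos_derivs_def sin_derivs_def quarter even odd
    by (simp_all add: sin_add cos_add)
qed

lemma round_warping_pos:
  assumes "0 < R"
  shows "s \<in> {0..<pi * R / 2} \<Longrightarrow> 0 < cos (s / R)" "s \<in> {0<..pi * R / 2} \<Longrightarrow> 0 < sin (s / R)"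
proof -
  assume "s \<in> {0..<pi * R / 2}"
  then have "0 \<le> s / R" "s / R < pi / 2"
    using assms by (auto simp: field_simps)
  then show "0 < cos (s / R)"
    by (intro cos_gt_zero_pi) auto
next
  assume "s \<in> {0<..pi * R / 2}"
  then have "0 < s / R" "s / R \<le> pi / 2"
    using assms by (auto simp: field_simps)
  then show "0 < sin (s / R)"
    using pi_gt_zero by (intro sin_gt_zero) linarith+
qed

lemma dwp_metric_round:
  assumes "0 < R"
  shows "dwp_metric (pi * R / 2) (\<lambda>s. R * cos (s / R)) (\<lambda>s. R * sin (s / R))"
proof -
  have smooth: "smooth_cl (pi * R / 2) (cos_derivs R) (\<lambda>s. R * cos (s / R))"
    "smooth_cl (pi * R / 2) (sin_derivs R) (\<lambda>s. R * sin (s / R))"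
    unfolding smooth_cl_def
    using has_field_derivative_at_within[OF has_real_derivative_cos_derivs]
      has_field_derivative_at_within[OF has_real_derivative_sin_derivs]
    by (simp_all add: cos_derivs_def sin_derivs_def)
  show ?thesis
    unfolding dwp_metric_def
    by (intro conjI; (rule exI[of _ "cos_derivs R"], rule exI[of _ "sin_derivs R"])?)
      (use smooth assms round_warping_pos[OF assms] round_boundary_values[of R] in auto)
qed

lemma deriv_round:
  assumes "R \<noteq> 0"
  shows "deriv (\<lambda>s. R * cos (s / R)) = (\<lambda>s. - sin (s / R))"
    "deriv (\<lambda>s. R * sin (s / R)) = (\<lambda>s. cos (s / R))"
    "deriv (\<lambda>s. - sin (s / R)) = (\<lambda>s. - cos (s / R) / R)"
    "deriv (\<lambda>s. cos (s / R)) = (\<lambda>s. - sin (s / R) / R)"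
  using assms by (auto intro!: DERIV_imp_deriv derivative_eq_intros simp: fun_eq_iff)

lemma dwp_concave_round:
  assumes "0 < R"
  shows "dwp_concave (pi * R / 2) (\<lambda>s. R * cos (s / R)) (\<lambda>s. R * sin (s / R))"
  unfolding dwp_concave_def deriv_round[OF less_imp_neq[OF assms, symmetric]]
proof (intro ballI conjI)
  fix s
  assume "s \<in> {0<..<pi * R / 2}"
  then have "0 < cos (s / R)" "0 < sin (s / R)"
    using round_warping_pos[OF assms] by auto
  then show "- cos (s / R) / R \<le> 0" "- sin (s / R) / R \<le> 0"
    using assms by (simp_all add: field_simps)
qed

lemma ricci_round_eq:
  fixes R s :: real
  defines "k \<equiv> \<lambda>s. R * cos (s / R)" and "h \<equiv> \<lambda>s. R * sin (s / R)"
  assumes "0 < R" "s \<in> {0<..<pi * R / 2}"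
  shows "ric_rad m n k h s = (real m + real n - 2) / R\<^sup>2"
    "ric_k m n k h s = (real m + real n - 2) / R\<^sup>2"
    "ric_h m n k h s = (real m + real n - 2) / R\<^sup>2"
proof -
  define c sn where "c = cos (s / R)" and "sn = sin (s / R)"
  have pos: "0 < c" "0 < sn"
    unfolding c_def sn_def using round_warping_pos[OF assms(3)] assms(4) by auto
  have pythagoras: "1 - (- sn)\<^sup>2 = c\<^sup>2" "1 - c\<^sup>2 = sn\<^sup>2"
    unfolding c_def sn_def by (simp add: sin_squared_eq, simp add: cos_squared_eq)
  note unfold_round = k_def h_def deriv_round[OF less_imp_neq[OF assms(3), symmetric]] c_def sn_def
  have "ric_rad m n k h s = - (real m - 1) * (- c / R) / (R * c) - (real n - 1) * (- sn / R) / (R * sn)"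
    unfolding ric_rad_def unfold_round ..
  also have "\<dots> = (real m + real n - 2) / R\<^sup>2"
    using pos assms(3) by (simp add: field_simps power2_eq_square)
  finally show "ric_rad m n k h s = (real m + real n - 2) / R\<^sup>2" .
  have "ric_k m n k h s = - (- c / R) / (R * c) + (real m - 2) * (1 - (- sn)\<^sup>2) / (R * c)\<^sup>2
      - (real n - 1) * - sn * c / (R * c * (R * sn))"
    unfolding ric_k_def unfold_round ..
  also have "\<dots> = (real m + real n - 2) / R\<^sup>2"
    unfolding pythagoras using pos assms(3) by (simp add: field_simps power2_eq_square)
  finally show "ric_k m n k h s = (real m + real n - 2) / R\<^sup>2" .
  have "ric_h m n k h s = - (- sn / R) / (R * sn) + (real n - 2) * (1 - c\<^sup>2) / (R * sn)\<^sup>2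
      - (real m - 1) * - sn * c / (R * c * (R * sn))"
    unfolding ric_h_def unfold_round ..
  also have "\<dots> = (real m + real n - 2) / R\<^sup>2"
    unfolding pythagoras using pos assms(3) by (simp add: field_simps power2_eq_square)
  finally show "ric_h m n k h s = (real m + real n - 2) / R\<^sup>2" .
qed

lemma dwp_pos_ricci_round:
  assumes "2 \<le> m" "2 \<le> n" "0 < R"
  shows "dwp_pos_ricci (pi * R / 2) m n (\<lambda>s. R * cos (s / R)) (\<lambda>s. R * sin (s / R))"
  unfolding dwp_pos_ricci_def
  using dwp_metric_round[OF assms(3)] ricci_round_eq[OF assms(3)] assms
  by (intro conjI exI[of _ "(real m + real n - 2) / R\<^sup>2"]) auto

theorem lemma3p11:
  fixes n m :: nat and R :: real and k1 h1 :: "real \<Rightarrow> real"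
  assumes "n \<ge> 2" and "m \<ge> 2" and "R > 0"
    and "\<forall>s\<in>{0<..<pi*R/2}. deriv (deriv k1) s \<le> 0"
    and "\<forall>s\<in>{0<..<pi*R/2}. deriv (deriv h1) s \<le> 0"
    and "dwp_pos_ricci (pi*R/2) m n k1 h1"
  shows "\<forall>l\<in>{1..2::real}. dwp_pos_ricci (pi*R/2) m n
           (\<lambda>s. (2 - l) * k1 s + (l - 1) * R * cos (s / R))
           (\<lambda>s. (2 - l) * h1 s + (l - 1) * R * sin (s / R))"
proof
  fix l :: real
  assume "l \<in> {1..2}"
  moreover have "dwp_concave (pi * R / 2) k1 h1"
    using assms(4,5) unfolding dwp_concave_def by blast
  ultimately have "dwp_pos_ricci (pi * R / 2) m n
      (\<lambda>s. (2 - l) * k1 s + (l - 1) * (R * cos (s / R)))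
      (\<lambda>s. (2 - l) * h1 s + (l - 1) * (R * sin (s / R)))"
    using assms by (intro dwp_pos_ricci_convex_comb dwp_pos_ricci_round dwp_concave_round) auto
  then show "dwp_pos_ricci (pi * R / 2) m n
      (\<lambda>s. (2 - l) * k1 s + (l - 1) * R * cos (s / R))
      (\<lambda>s. (2 - l) * h1 s + (l - 1) * R * sin (s / R))"
    by (simp only: mult.assoc)
qed

end
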